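(* Let $(X,T)$ be a dynamical system and let $K\subset\mathrm{Per}(T)$ be linkable. Then $\overline{\mathcal M_T^{co}(K)}$ equals the closed convex hull of $\mathcal M_T^{co}(K)$ in $\mathcal M(X)$ (closures in the weak$*$ topology).
   Context: A dynamical system $(X,T)$ consists of a complete separable metric space $(X,\rho)$ and a continuous surjection $T\colon X\to X$; $\mathcal M(X)$ is the space of Borel probability measures with the weak$*$ topology. For $x\in\mathrm{Per}(T)$ of minimal period $k$, $\gamma(x)=\frac1k\sum_{j=0}^{k-1}\delta_{T^jx}$; $\mathcal M_T^{co}(K)=\{\gamma(x):x\in K\}$. $B(x,n,\varepsilon)=\{y:\rho(T^jy,T^jx)<\varepsilon,\ 0\le j<n\}$. $K\subset\mathrm{Per}(T)$ is linkable if for all $y_1,y_2\in K$, $\varepsilon>0$, $\lambda\in[0,1]$ there exist $p_1,p_2,q_1,q_2\in\mathbb N$ and $z\in K$ with: $T^{q_2}z=z$; $\lambda-\varepsilon\le\frac{p_1}{p_1+p_2}\le\lambda+\varepsilon$; $p_1\le q_1\le(1+\varepsilon)p_1$ and $z\in B(y_1,p_1,\varepsilon)$; $p_2\le q_2-q_1\le(1+\varepsilon)p_2$ and $T^{q_1}z\in B(y_2,p_2,\varepsilon)$. *)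

theory Defs
  imports "HOL-Probability.Probability"
begin

text \<open>The space X is a type of class polish_space (complete separable metric space);
  the whole type is the space.\<close>

definition dyn_system :: "('a::polish_space \<Rightarrow> 'a) \<Rightarrow> bool" where
  "dyn_system T \<longleftrightarrow> continuous_on UNIV T \<and> surj T"

definition Per :: "('a \<Rightarrow> 'a) \<Rightarrow> 'a set" where
  "Per T = {x. \<exists>n>0. (T ^^ n) x = x}"

definition min_period :: "('a \<Rightarrow> 'a) \<Rightarrow> 'a \<Rightarrow> nat" where
  "min_period T x = (LEAST n. n > 0 \<and> (T ^^ n) x = x)"

definition prob_measures :: "'a::topological_space measure set" where
  "prob_measures = {\<mu>. prob_space \<mu> \<and> sets \<mu> = sets borel}"

definition weak_star :: "'a::metric_space measure topology" where
  "weak_star = topology_generated_by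
     {{\<mu> \<in> prob_measures. (\<integral>x. f x \<partial>\<mu>) \<in> U} | f U.
        continuous_on UNIV f \<and> bounded (range f) \<and> open (U :: real set)}"

definition mcomb :: "'i set \<Rightarrow> ('i \<Rightarrow> real) \<Rightarrow> ('i \<Rightarrow> 'a::topological_space measure) \<Rightarrow> 'a measure" where
  "mcomb I c m = measure_of UNIV (sets borel) (\<lambda>A. \<Sum>i\<in>I. ennreal (c i) * emeasure (m i) A)"

definition mix :: "real \<Rightarrow> 'a::topological_space measure \<Rightarrow> 'a measure \<Rightarrow> 'a measure" where
  "mix t \<mu> \<nu> = measure_of UNIV (sets borel)
      (\<lambda>A. ennreal t * emeasure \<mu> A + ennreal (1 - t) * emeasure \<nu> A)"

definition gamma :: "('a::topological_space \<Rightarrow> 'a) \<Rightarrow> 'a \<Rightarrow> 'a measure" where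
  "gamma T x = (let k = min_period T x in
      mcomb {..<k} (\<lambda>_. 1 / real k) (\<lambda>j. return borel ((T ^^ j) x)))"

definition Mco :: "('a::topological_space \<Rightarrow> 'a) \<Rightarrow> 'a set \<Rightarrow> 'a measure set" where
  "Mco T K = gamma T ` K"

definition convex_measures :: "'a::topological_space measure set \<Rightarrow> bool" where
  "convex_measures S \<longleftrightarrow> (\<forall>\<mu>\<in>S. \<forall>\<nu>\<in>S. \<forall>t\<in>{0..1}. mix t \<mu> \<nu> \<in> S)"

definition closed_convex_hull :: "'a::metric_space measure set \<Rightarrow> 'a measure set" where
  "closed_convex_hull S = \<Inter>{C. C \<subseteq> prob_measures \<and> S \<subseteq> C \<and> closedin weak_star C \<and> convex_measures C}"

definition bowen_ball :: "('a::metric_space \<Rightarrow> 'a) \<Rightarrow> 'a \<Rightarrow> nat \<Rightarrow> real \<Rightarrow> 'a set" where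
  "bowen_ball T x n \<epsilon> = {y. \<forall>j<n. dist ((T ^^ j) y) ((T ^^ j) x) < \<epsilon>}"

definition linkable :: "('a::metric_space \<Rightarrow> 'a) \<Rightarrow> 'a set \<Rightarrow> bool" where
  "linkable T K \<longleftrightarrow> K \<subseteq> Per T \<and>
    (\<forall>y1\<in>K. \<forall>y2\<in>K. \<forall>\<epsilon>>0. \<forall>lam\<in>{0..1::real}.
      \<exists>p1 p2 q1 q2 :: nat. \<exists>z\<in>K.
        p1 \<ge> 1 \<and> p2 \<ge> 1 \<and> q1 \<ge> 1 \<and> q2 \<ge> 1 \<and>
        (T ^^ q2) z = z \<and>
        lam - \<epsilon> \<le> real p1 / (real p1 + real p2) \<and> real p1 / (real p1 + real p2) \<le> lam + \<epsilon> \<and>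
        p1 \<le> q1 \<and> real q1 \<le> (1 + \<epsilon>) * real p1 \<and> z \<in> bowen_ball T y1 p1 \<epsilon> \<and>
        real p2 \<le> real q2 - real q1 \<and> real q2 - real q1 \<le> (1 + \<epsilon>) * real p2 \<and>
        (T ^^ q1) z \<in> bowen_ball T y2 p2 \<epsilon>)"

end

theory Submission
  imports Defs
begin

text \<open>
  It suffices to show that the weak* closure of the periodic measures \<open>\<gamma>(y)\<close>, \<open>y \<in> K\<close>, is convex.
  Given \<open>y\<^sub>1, y\<^sub>2 \<in> K\<close> and \<open>t \<in> [0, 1]\<close>, linkability yields \<open>z \<in> K\<close> whose orbit shadows that of
  \<open>y\<^sub>1\<close> for \<open>p\<^sub>1\<close> steps and then that of \<open>y\<^sub>2\<close> for \<open>p\<^sub>2\<close> steps, with \<open>p\<^sub>1 / (p\<^sub>1 + p\<^sub>2) \<approx> t\<close> and a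
  period only slightly longer than \<open>p\<^sub>1 + p\<^sub>2\<close>. For a bounded continuous \<open>f\<close>, the average of \<open>f\<close>
  over the period of \<open>z\<close> is then close to \<open>t \<integral>f d\<gamma>(y\<^sub>1) + (1 - t) \<integral>f d\<gamma>(y\<^sub>2)\<close>: shadowing costs
  little by continuity of \<open>f\<close> at the finitely many orbit points, incomplete periods cost at most
  a constant, which is negligible once \<open>p\<^sub>1 + p\<^sub>2\<close> is large, and the remaining transition steps are
  few. So \<open>\<gamma>(z)\<close> is weak* close to the mixture of \<open>\<gamma>(y\<^sub>1)\<close> and \<open>\<gamma>(y\<^sub>2)\<close>, and hence mixtures of
  limits of periodic measures are again such limits.
\<close>

section \<open>Periodic orbits and their averages\<close>

lemma min_period:
  assumes "y \<in> Per T"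
  shows "min_period T y > 0" "(T ^^ min_period T y) y = y"
proof -
  obtain n where "n > 0 \<and> (T ^^ n) y = y"
    using assms unfolding Per_def by blast
  then have "min_period T y > 0 \<and> (T ^^ min_period T y) y = y"
    unfolding min_period_def by (rule LeastI)
  then show "min_period T y > 0" "(T ^^ min_period T y) y = y"
    by auto
qed

lemma min_period_dvd:
  assumes "y \<in> Per T" "q > 0" "(T ^^ q) y = y"
  shows "min_period T y dvd q"
proof -
  have "(T ^^ (q mod min_period T y)) y = y"
    using funpow_mod_eq[OF min_period(2)[OF assms(1)], of q] assms(3) by simp
  moreover have "q mod min_period T y < min_period T y"
    using min_period(1)[OF assms(1)] by simp
  then have "\<not> (0 < q mod min_period T y \<and> (T ^^ (q mod min_period T y)) y = y)"
    unfolding min_period_def by (rule not_less_Least)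
  ultimately have "q mod min_period T y = 0"
    by simp
  then show ?thesis
    by (simp add: dvd_eq_mod_eq_0)
qed

lemma range_funpow_periodic:
  assumes "(T ^^ k) y = y" "k > 0"
  shows "range (\<lambda>j. (T ^^ j) y) = (\<lambda>j. (T ^^ j) y) ` {..<k}"
proof (intro equalityI subsetI)
  fix x assume "x \<in> range (\<lambda>j. (T ^^ j) y)"
  then obtain j where "x = (T ^^ (j mod k)) y"
    using funpow_mod_eq[OF assms(1)] by auto
  then show "x \<in> (\<lambda>j. (T ^^ j) y) ` {..<k}"
    using assms(2) by auto
qed auto

lemma finite_orbit_Per: "y \<in> Per T \<Longrightarrow> finite (range (\<lambda>j. (T ^^ j) y))"
  by (simp add: range_funpow_periodic[OF min_period(2) min_period(1)])

lemma sum_lessThan_add: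
  fixes g :: "nat \<Rightarrow> 'b::comm_monoid_add"
  shows "(\<Sum>j<a + b. g j) = (\<Sum>j<a. g j) + (\<Sum>j<b. g (a + j))"
  by (induction b) (simp_all add: add.assoc)

lemma abs_sum_lessThan_le:
  fixes g :: "nat \<Rightarrow> real"
  assumes "\<And>j. j < n \<Longrightarrow> \<bar>g j\<bar> \<le> B"
  shows "\<bar>\<Sum>j<n. g j\<bar> \<le> real n * B"
proof -
  have "\<bar>\<Sum>j<n. g j\<bar> \<le> (\<Sum>j<n. \<bar>g j\<bar>)"
    by (rule sum_abs)
  also have "\<dots> \<le> real n * B"
    using sum_bounded_above[of "{..<n}" "\<lambda>j. \<bar>g j\<bar>" B] assms by simp
  finally show ?thesis .
qed

lemma sum_funpow_periodic:
  fixes f :: "'a \<Rightarrow> real"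
  assumes "(T ^^ k) y = y"
  shows "(\<Sum>j<m * k + r. f ((T ^^ j) y)) = real m * (\<Sum>j<k. f ((T ^^ j) y)) + (\<Sum>j<r. f ((T ^^ j) y))"
proof (induction m)
  case (Suc m)
  have "(T ^^ (k + j)) y = (T ^^ j) y" for j
    using assms by (simp add: funpow_add add.commute[of k])
  then have "(\<Sum>j<Suc m * k + r. f ((T ^^ j) y))
      = (\<Sum>j<k. f ((T ^^ j) y)) + (\<Sum>j<m * k + r. f ((T ^^ j) y))"
    using sum_lessThan_add[of "\<lambda>j. f ((T ^^ j) y)" k "m * k + r"] by (simp add: add.assoc)
  with Suc show ?case
    by (simp add: algebra_simps)
qed simp

definition orbit_average :: "('a \<Rightarrow> 'a) \<Rightarrow> 'a \<Rightarrow> ('a \<Rightarrow> real) \<Rightarrow> real" where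
  "orbit_average T y f = (\<Sum>j<min_period T y. f ((T ^^ j) y)) / real (min_period T y)"

lemma orbit_average_period:
  assumes "y \<in> Per T" "(T ^^ q) y = y" "q > 0"
  shows "orbit_average T y f = (\<Sum>j<q. f ((T ^^ j) y)) / real q"
proof -
  obtain m where m: "q = m * min_period T y"
    using min_period_dvd[OF assms(1,3,2)] by (metis dvd_def mult.commute)
  then have "m > 0"
    using assms(3) by (cases m) auto
  then show ?thesis
    using sum_funpow_periodic[OF min_period(2)[OF assms(1)], of f m 0]
    unfolding orbit_average_def m by simp
qed

lemma abs_orbit_average_le:
  assumes "y \<in> Per T" "\<And>x. \<bar>f x\<bar> \<le> B"
  shows "\<bar>orbit_average T y f\<bar> \<le> B"
proof -
  have "\<bar>\<Sum>j<min_period T y. f ((T ^^ j) y)\<bar> \<le> real (min_period T y) * B"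
    by (rule abs_sum_lessThan_le) (rule assms(2))
  moreover have "0 < real (min_period T y)"
    using min_period(1)[OF assms(1)] by simp
  ultimately show ?thesis
    unfolding orbit_average_def abs_divide abs_of_nat by (simp add: pos_divide_le_eq mult.commute)
qed

lemma orbit_sum_approx:
  assumes y: "y \<in> Per T" and f: "\<And>x. \<bar>f x\<bar> \<le> B"
  shows "\<bar>(\<Sum>j<p. f ((T ^^ j) y)) - real p * orbit_average T y f\<bar> \<le> 2 * real (min_period T y) * B"
proof -
  define k where "k = min_period T y"
  define A where "A = orbit_average T y f"
  define R where "R = (\<Sum>j<p mod k. f ((T ^^ j) y))"
  have k: "k > 0" "(T ^^ k) y = y"
    using min_period[OF y] unfolding k_def by auto
  have "(\<Sum>j<p. f ((T ^^ j) y)) = real (p div k) * (\<Sum>j<k. f ((T ^^ j) y)) + R"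
    using sum_funpow_periodic[OF k(2), of f "p div k" "p mod k"] unfolding R_def by simp
  also have "(\<Sum>j<k. f ((T ^^ j) y)) = real k * A"
    using k(1) unfolding A_def orbit_average_def k_def by simp
  also have "real p = real (p div k) * real k + real (p mod k)"
    by (metis of_nat_add of_nat_mult div_mult_mod_eq)
  ultimately have "(\<Sum>j<p. f ((T ^^ j) y)) - real p * A = R - real (p mod k) * A"
    by (simp add: algebra_simps)
  moreover have "\<bar>R\<bar> \<le> real k * B"
  proof -
    have "\<bar>R\<bar> \<le> real (p mod k) * B"
      unfolding R_def by (rule abs_sum_lessThan_le) (rule f)
    also have "\<dots> \<le> real k * B"
      using k(1) f[of y] by (intro mult_right_mono) auto
    finally show ?thesis .
  qed
  moreover have "\<bar>real (p mod k) * A\<bar> \<le> real k * B"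
    unfolding abs_mult using k(1) abs_orbit_average_le[OF y f] f[of y]
    by (intro mult_mono) (auto simp: A_def)
  ultimately show ?thesis
    unfolding A_def k_def by linarith
qed

lemma shadowing_sum_approx:
  assumes "y \<in> Per T" "\<And>x. \<bar>f x\<bar> \<le> B"
    and "\<And>j. j < p \<Longrightarrow> \<bar>f ((T ^^ j) w) - f ((T ^^ j) y)\<bar> \<le> d"
  shows "\<bar>(\<Sum>j<p. f ((T ^^ j) w)) - real p * orbit_average T y f\<bar>
    \<le> real p * d + 2 * real (min_period T y) * B"
proof -
  have "\<bar>(\<Sum>j<p. f ((T ^^ j) w)) - (\<Sum>j<p. f ((T ^^ j) y))\<bar> \<le> real p * d"
    unfolding sum_subtractf[symmetric] by (rule abs_sum_lessThan_le) (rule assms(3))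
  moreover have "\<bar>(\<Sum>j<p. f ((T ^^ j) y)) - real p * orbit_average T y f\<bar>
      \<le> 2 * real (min_period T y) * B"
    using assms(1) by (rule orbit_sum_approx) (rule assms(2))
  ultimately show ?thesis
    by linarith
qed

lemma sum_concat_approx:
  fixes g :: "nat \<Rightarrow> real"
  assumes q: "p1 \<le> q1" "q1 + p2 \<le> q" and g: "\<And>j. \<bar>g j\<bar> \<le> B"
    and a1: "\<bar>(\<Sum>j<p1. g j) - a1\<bar> \<le> E1" and a2: "\<bar>(\<Sum>j<p2. g (q1 + j)) - a2\<bar> \<le> E2"
  shows "\<bar>(\<Sum>j<q. g j) - (a1 + a2)\<bar> \<le> E1 + E2 + (real q - (real p1 + real p2)) * B"
proof -
  define gap1 where "gap1 = (\<Sum>j<q1 - p1. g (p1 + j))"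
  define gap2 where "gap2 = (\<Sum>j<q - q1 - p2. g (q1 + p2 + j))"
  have "(\<Sum>j<q. g j) = (\<Sum>j<q1. g j) + (\<Sum>j<q - q1. g (q1 + j))"
    using sum_lessThan_add[of g q1 "q - q1"] q by simp
  also have "(\<Sum>j<q1. g j) = (\<Sum>j<p1. g j) + gap1"
    using sum_lessThan_add[of g p1 "q1 - p1"] q unfolding gap1_def by simp
  also have "(\<Sum>j<q - q1. g (q1 + j)) = (\<Sum>j<p2. g (q1 + j)) + gap2"
    using sum_lessThan_add[of "\<lambda>j. g (q1 + j)" p2 "q - q1 - p2"] q
    unfolding gap2_def by (simp add: add.assoc)
  finally have "(\<Sum>j<q. g j) = (\<Sum>j<p1. g j) + gap1 + ((\<Sum>j<p2. g (q1 + j)) + gap2)" .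
  moreover have "\<bar>gap1\<bar> \<le> real (q1 - p1) * B" "\<bar>gap2\<bar> \<le> real (q - q1 - p2) * B"
    unfolding gap1_def gap2_def using g by (auto intro: abs_sum_lessThan_le)
  moreover have "real (q1 - p1) + real (q - q1 - p2) = real q - (real p1 + real p2)"
    using q by (simp add: of_nat_diff)
  ultimately show ?thesis
    using a1 a2 by (smt (verit, best) distrib_right)
qed

section \<open>Finite combinations of probability measures\<close>

lemma measurable_sets_borel:
  "sets M = sets borel \<Longrightarrow> u \<in> borel_measurable borel \<Longrightarrow> u \<in> borel_measurable M"
  by (subst measurable_cong_sets[of M borel]) simp_all

lemma sets_mcomb [simp, measurable_cong]: "sets (mcomb I c N) = sets borel"
  unfolding mcomb_def by (metis sets.sigma_sets_eq sets_measure_of space_borel sets.space_closed)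

lemma space_mcomb [simp]: "space (mcomb I c N) = UNIV"
  using sets_eq_imp_space_eq[OF sets_mcomb[of I c N]] by simp

lemma sets_prob_measures: "\<mu> \<in> prob_measures \<Longrightarrow> sets \<mu> = sets borel"
  unfolding prob_measures_def by simp

lemma space_prob_measures: "\<mu> \<in> prob_measures \<Longrightarrow> space \<mu> = UNIV"
  unfolding prob_measures_def by (metis (mono_tags) mem_Collect_eq sets_eq_imp_space_eq space_borel)

lemma emeasure_UNIV_prob_measures: "\<mu> \<in> prob_measures \<Longrightarrow> emeasure \<mu> UNIV = 1"
  using prob_space.emeasure_space_1 space_prob_measures unfolding prob_measures_def by fastforce

lemma return_in_prob_measures: "return borel x \<in> prob_measures"
  by (simp add: prob_measures_def prob_space_return)

lemma emeasure_mcomb: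
  fixes N :: "'i \<Rightarrow> 'a::topological_space measure"
  assumes "finite I" "\<And>i. i \<in> I \<Longrightarrow> sets (N i) = sets borel" "A \<in> sets borel"
  shows "emeasure (mcomb I c N) A = (\<Sum>i\<in>I. ennreal (c i) * emeasure (N i) A)"
  unfolding mcomb_def
proof (rule emeasure_measure_of_sigma)
  show "sigma_algebra UNIV (sets borel)"
    by (metis sets.sigma_algebra_axioms space_borel)
  show "countably_additive (sets borel) (\<lambda>A. \<Sum>i\<in>I. ennreal (c i) * emeasure (N i) A)"
    unfolding countably_additive_def
  proof (intro allI impI)
    fix A :: "nat \<Rightarrow> 'a set" assume "range A \<subseteq> sets borel" "disjoint_family A"
    then have "(\<Sum>n. ennreal (c i) * emeasure (N i) (A n)) = ennreal (c i) * emeasure (N i) (\<Union>n. A n)"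
      if "i \<in> I" for i
      using assms(2)[OF that] by (simp add: suminf_emeasure)
    then show "(\<Sum>n. \<Sum>i\<in>I. ennreal (c i) * emeasure (N i) (A n))
        = (\<Sum>i\<in>I. ennreal (c i) * emeasure (N i) (\<Union>n. A n))"
      by (simp add: suminf_sum)
  qed
qed (use assms in \<open>auto simp: positive_def\<close>)

lemma nn_integral_mcomb:
  assumes I: "finite I" and N: "\<And>i. i \<in> I \<Longrightarrow> sets (N i) = sets borel"
    and u: "u \<in> borel_measurable borel"
  shows "(\<integral>\<^sup>+x. u x \<partial>mcomb I c N) = (\<Sum>i\<in>I. ennreal (c i) * (\<integral>\<^sup>+x. u x \<partial>N i))"
  using u
proof (induct rule: borel_measurable_induct)
  case (cong f g)
  then show ?case by (simp cong: nn_integral_cong)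
next
  case (set A)
  then show ?case
    using N by (simp add: emeasure_mcomb[OF I N] cong: sum.cong)
next
  case (mult u k)
  have "u \<in> borel_measurable (N i)" if "i \<in> I" for i
    using mult(2) N[OF that] by (rule measurable_sets_borel[rotated])
  with mult show ?case
    by (simp add: nn_integral_cmult sum_distrib_left ac_simps cong: sum.cong)
next
  case (add u v)
  have "u \<in> borel_measurable (N i)" "v \<in> borel_measurable (N i)" if "i \<in> I" for i
    using add(1,4) N[OF that] by (auto intro: measurable_sets_borel)
  with add show ?case
    by (simp add: nn_integral_add distrib_left sum.distrib cong: sum.cong)
next
  case (seq U)
  have meas: "U k \<in> borel_measurable (N i)" if "i \<in> I" for i k
    using seq(1) N[OF that] by (rule measurable_sets_borel[rotated])
  have mono: "incseq (\<lambda>k. ennreal (c i) * (\<integral>\<^sup>+x. U k x \<partial>N i))" for i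
    using seq(4) by (auto simp: incseq_def le_fun_def intro!: mult_left_mono nn_integral_mono)
  have "(\<integral>\<^sup>+x. (SUP k. U k) x \<partial>mcomb I c N) = (SUP k. \<integral>\<^sup>+x. U k x \<partial>mcomb I c N)"
    unfolding SUP_apply using seq(1,4)
    by (intro nn_integral_monotone_convergence_SUP) (auto intro: measurable_sets_borel)
  also have "\<dots> = (SUP k. \<Sum>i\<in>I. ennreal (c i) * (\<integral>\<^sup>+x. U k x \<partial>N i))"
    using seq(3) by simp
  also have "\<dots> = (\<Sum>i\<in>I. SUP k. ennreal (c i) * (\<integral>\<^sup>+x. U k x \<partial>N i))"
    using mono by (rule ennreal_SUP_sum)
  also have "\<dots> = (\<Sum>i\<in>I. ennreal (c i) * (\<integral>\<^sup>+x. (SUP k. U k) x \<partial>N i))"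
  proof (rule sum.cong[OF refl])
    fix i assume "i \<in> I"
    then have "(\<integral>\<^sup>+x. (SUP k. U k) x \<partial>N i) = (SUP k. \<integral>\<^sup>+x. U k x \<partial>N i)"
      unfolding SUP_apply using seq(4) meas by (intro nn_integral_monotone_convergence_SUP) auto
    then show "(SUP k. ennreal (c i) * (\<integral>\<^sup>+x. U k x \<partial>N i))
        = ennreal (c i) * (\<integral>\<^sup>+x. (SUP k. U k) x \<partial>N i)"
      by (simp add: SUP_mult_left_ennreal)
  qed
  finally show ?case .
qed

lemma finite_measure_mcomb:
  assumes "finite I" "\<And>i. i \<in> I \<Longrightarrow> N i \<in> prob_measures"
  shows "finite_measure (mcomb I c N)"
proof (rule finite_measureI)
  have "emeasure (N i) UNIV < \<top>" if "i \<in> I" for i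
    using assms(2)[OF that] by (simp add: emeasure_UNIV_prob_measures)
  then have "(\<Sum>i\<in>I. ennreal (c i) * emeasure (N i) UNIV) \<noteq> \<top>"
    using assms(1) by (simp add: ennreal_mult_less_top less_top)
  then show "emeasure (mcomb I c N) (space (mcomb I c N)) \<noteq> \<infinity>"
    using emeasure_mcomb[OF assms(1) sets_prob_measures[OF assms(2)]] by simp
qed

lemma mcomb_in_prob_measures:
  assumes "finite I" "\<And>i. i \<in> I \<Longrightarrow> c i \<ge> 0" "(\<Sum>i\<in>I. c i) = 1"
    and "\<And>i. i \<in> I \<Longrightarrow> N i \<in> prob_measures"
  shows "mcomb I c N \<in> prob_measures"
proof -
  have "emeasure (mcomb I c N) UNIV = (\<Sum>i\<in>I. ennreal (c i))"
    using emeasure_mcomb[OF assms(1) sets_prob_measures[OF assms(4)]]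
    by (simp add: emeasure_UNIV_prob_measures assms(4))
  also have "\<dots> = 1"
    using assms(2,3) by (simp add: sum_ennreal)
  finally have "prob_space (mcomb I c N)"
    by (intro prob_spaceI) simp
  then show ?thesis
    unfolding prob_measures_def by simp
qed

lemma integral_mcomb_nonneg:
  assumes I: "finite I" and c: "\<And>i. i \<in> I \<Longrightarrow> c i \<ge> 0"
    and N: "\<And>i. i \<in> I \<Longrightarrow> N i \<in> prob_measures"
    and g: "g \<in> borel_measurable borel" "\<And>x. 0 \<le> g x" "\<And>x. g x \<le> B"
  shows "(\<integral>x. g x \<partial>mcomb I c N) = (\<Sum>i\<in>I. c i * (\<integral>x. g x \<partial>N i))"
proof -
  have sets: "sets (N i) = sets borel" if "i \<in> I" for i
    using N[OF that] unfolding prob_measures_def by simp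
  have integrable: "integrable M g" if "finite_measure M" "sets M = sets borel" for M
    using that g by (intro finite_measure.integrable_const_bound[where B = B])
      (auto intro: measurable_sets_borel)
  have "ennreal (\<integral>x. g x \<partial>mcomb I c N) = (\<integral>\<^sup>+x. g x \<partial>mcomb I c N)"
    using g by (simp add: nn_integral_eq_integral integrable finite_measure_mcomb[OF I N])
  also have "\<dots> = (\<Sum>i\<in>I. ennreal (c i) * (\<integral>\<^sup>+x. g x \<partial>N i))"
    using g(1) by (intro nn_integral_mcomb[OF I sets]) auto
  also have "\<dots> = (\<Sum>i\<in>I. ennreal (c i * (\<integral>x. g x \<partial>N i)))"
    using g N c sets unfolding prob_measures_def
    by (intro sum.cong refl)
      (simp add: nn_integral_eq_integral integrable prob_space.finite_measure ennreal_mult')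
  also have "\<dots> = ennreal (\<Sum>i\<in>I. c i * (\<integral>x. g x \<partial>N i))"
    using c g by (intro sum_ennreal) simp
  finally show ?thesis
    using c g by (simp add: sum_nonneg integral_nonneg)
qed

lemma integral_mcomb:
  assumes I: "finite I" and c: "\<And>i. i \<in> I \<Longrightarrow> c i \<ge> 0"
    and N: "\<And>i. i \<in> I \<Longrightarrow> N i \<in> prob_measures"
    and f: "f \<in> borel_measurable borel" "\<And>x. \<bar>f x\<bar> \<le> B"
  shows "(\<integral>x. f x \<partial>mcomb I c N) = (\<Sum>i\<in>I. c i * (\<integral>x. f x \<partial>N i))"
proof -
  have B: "0 \<le> B"
    using f(2)[of undefined] by simp
  have fB_bounds: "0 \<le> f x + B" "f x + B \<le> 2 * B" for x
    using f(2)[of x] by linarith+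
  have fB: "(\<lambda>x. f x + B) \<in> borel_measurable borel" "\<And>x. 0 \<le> f x + B" "\<And>x. f x + B \<le> 2 * B"
    using f(1) fB_bounds by auto
  have shift: "(\<integral>x. f x \<partial>M) = (\<integral>x. f x + B \<partial>M) - (\<integral>x. B \<partial>M)"
    if "finite_measure M" "sets M = sets borel" for M
  proof -
    have "integrable M (\<lambda>x. f x + B)"
      using that fB by (intro finite_measure.integrable_const_bound[where B = "2 * B"])
        (auto intro: measurable_sets_borel)
    moreover have "integrable M (\<lambda>x. B)"
      using that(1) by (rule finite_measure.integrable_const)
    ultimately show ?thesis
      by (subst Bochner_Integration.integral_diff[symmetric]) simp_all
  qed
  have "(\<integral>x. f x \<partial>mcomb I c N) = (\<integral>x. f x + B \<partial>mcomb I c N) - (\<integral>x. B \<partial>mcomb I c N)"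
    using finite_measure_mcomb[OF I N] sets_mcomb by (rule shift)
  also have "\<dots> = (\<Sum>i\<in>I. c i * ((\<integral>x. f x + B \<partial>N i) - (\<integral>x. B \<partial>N i)))"
    using integral_mcomb_nonneg[OF I c N fB]
      integral_mcomb_nonneg[OF I c N borel_measurable_const B order.refl]
    by (simp add: sum_subtractf right_diff_distrib)
  also have "\<dots> = (\<Sum>i\<in>I. c i * (\<integral>x. f x \<partial>N i))"
    using N by (intro sum.cong refl) (simp only: shift prob_space.finite_measure prob_measures_def
        mem_Collect_eq)
  finally show ?thesis .
qed

lemma mix_eq_mcomb:
  "mix t \<mu> \<nu> = mcomb UNIV (\<lambda>b. if b then t else 1 - t) (\<lambda>b. if b then \<mu> else \<nu>)"
  unfolding mix_def mcomb_def UNIV_bool by (simp add: add.commute)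

lemma mix_in_prob_measures:
  "\<mu> \<in> prob_measures \<Longrightarrow> \<nu> \<in> prob_measures \<Longrightarrow> t \<in> {0..1} \<Longrightarrow> mix t \<mu> \<nu> \<in> prob_measures"
  unfolding mix_eq_mcomb by (rule mcomb_in_prob_measures) (auto simp: UNIV_bool)

lemma integral_mix:
  assumes "\<mu> \<in> prob_measures" "\<nu> \<in> prob_measures" "t \<in> {0..1}"
    and "f \<in> borel_measurable borel" "\<And>x. \<bar>f x\<bar> \<le> B"
  shows "(\<integral>x. f x \<partial>mix t \<mu> \<nu>) = t * (\<integral>x. f x \<partial>\<mu>) + (1 - t) * (\<integral>x. f x \<partial>\<nu>)"
  unfolding mix_eq_mcomb using assms by (subst integral_mcomb) (auto simp: UNIV_bool)

lemma gamma_eq_mcomb: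
  "gamma T y = mcomb {..<min_period T y} (\<lambda>_. 1 / real (min_period T y)) (\<lambda>j. return borel ((T ^^ j) y))"
  unfolding gamma_def Let_def ..

lemma gamma_in_prob_measures: "y \<in> Per T \<Longrightarrow> gamma T y \<in> prob_measures"
  unfolding gamma_eq_mcomb using min_period(1)[of y T]
  by (intro mcomb_in_prob_measures) (simp_all add: return_in_prob_measures)

lemma integral_gamma:
  assumes "y \<in> Per T" "f \<in> borel_measurable borel" "\<And>x. \<bar>f x\<bar> \<le> B"
  shows "(\<integral>x. f x \<partial>gamma T y) = orbit_average T y f"
  unfolding gamma_eq_mcomb orbit_average_def using assms
  by (subst integral_mcomb) (simp_all add: return_in_prob_measures sum_divide_distrib integral_return)

lemma finite_bcontfun_bound:
  fixes F :: "('a::topological_space \<Rightarrow> real) set"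
  assumes "finite F" "F \<subseteq> bcontfun"
  shows "\<exists>B>0. \<forall>f\<in>F. \<forall>x. \<bar>f x\<bar> \<le> B"
proof -
  have "bounded (\<Union>f\<in>F. range f)"
    using assms by (intro bounded_UN) (auto simp: bcontfun_def)
  then show ?thesis
    unfolding bounded_pos by force
qed

lemma bcontfun_measurable_bounded:
  fixes f :: "'a::metric_space \<Rightarrow> real"
  assumes "f \<in> bcontfun"
  obtains B where "f \<in> borel_measurable borel" "\<And>x. \<bar>f x\<bar> \<le> B"
proof -
  have "f \<in> borel_measurable borel"
    using assms by (intro borel_measurable_continuous_onI) (simp add: bcontfun_def)
  moreover obtain B where "\<forall>g\<in>{f}. \<forall>x. \<bar>g x\<bar> \<le> B"
    using finite_bcontfun_bound[of "{f}"] assms by blast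
  ultimately show thesis
    using that by blast
qed

lemma integral_gamma_bcontfun:
  fixes f :: "'a::metric_space \<Rightarrow> real"
  assumes "y \<in> Per T" "f \<in> bcontfun"
  shows "(\<integral>x. f x \<partial>gamma T y) = orbit_average T y f"
proof -
  obtain B where "f \<in> borel_measurable borel" "\<And>x. \<bar>f x\<bar> \<le> B"
    using bcontfun_measurable_bounded[OF assms(2)] by blast
  then show ?thesis
    by (rule integral_gamma[OF assms(1)])
qed

lemma integral_mix_bcontfun:
  fixes f :: "'a::metric_space \<Rightarrow> real"
  assumes "\<mu> \<in> prob_measures" "\<nu> \<in> prob_measures" "t \<in> {0..1}" "f \<in> bcontfun"
  shows "(\<integral>x. f x \<partial>mix t \<mu> \<nu>) = t * (\<integral>x. f x \<partial>\<mu>) + (1 - t) * (\<integral>x. f x \<partial>\<nu>)"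
proof -
  obtain B where "f \<in> borel_measurable borel" "\<And>x. \<bar>f x\<bar> \<le> B"
    using bcontfun_measurable_bounded[OF assms(4)] by blast
  then show ?thesis
    by (rule integral_mix[OF assms(1-3)])
qed

section \<open>Neighbourhoods in the weak* topology\<close>

lemma weak_star_bcontfun:
  "weak_star = topology_generated_by
     {{\<mu> \<in> prob_measures. (\<integral>x. f x \<partial>\<mu>) \<in> U} | f U. f \<in> bcontfun \<and> open (U :: real set)}"
  unfolding weak_star_def bcontfun_def by simp

lemma topspace_weak_star: "topspace (weak_star :: 'a::metric_space measure topology) = prob_measures"
  unfolding weak_star_bcontfun topology_generated_by_topspace
proof (intro equalityI subsetI)
  fix \<mu> :: "'a measure"
  assume "\<mu> \<in> prob_measures"
  then have "\<mu> \<in> {\<nu> \<in> prob_measures. (\<integral>x. 0 \<partial>\<nu>) \<in> (UNIV :: real set)}"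
    by simp
  moreover have "{\<nu> \<in> prob_measures. (\<integral>x. 0 \<partial>\<nu>) \<in> (UNIV :: real set)}
      \<in> {{\<mu> \<in> prob_measures. (\<integral>x. f x \<partial>\<mu>) \<in> U} | f U. f \<in> bcontfun \<and> open (U :: real set)}"
    by (intro CollectI exI[of _ "\<lambda>_. 0"] exI[of _ UNIV]) (simp add: bcontfun_def)
  ultimately show "\<mu> \<in> \<Union>{{\<mu> \<in> prob_measures. (\<integral>x. f x \<partial>\<mu>) \<in> U} | f U. f \<in> bcontfun \<and> open (U :: real set)}"
    by (rule UnionI[rotated])
qed auto

lemma openin_weak_star_subbasic:
  fixes f :: "'a::metric_space \<Rightarrow> real"
  shows "f \<in> bcontfun \<Longrightarrow> open U \<Longrightarrow> openin weak_star {\<mu> \<in> prob_measures. (\<integral>x. f x \<partial>\<mu>) \<in> U}"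
  unfolding weak_star_bcontfun by (rule topology_generated_by_Basis) blast

definition weak_star_nbhd :: "'a::metric_space measure \<Rightarrow> ('a \<Rightarrow> real) set \<Rightarrow> real \<Rightarrow> 'a measure set" where
  "weak_star_nbhd \<mu> F e = {\<nu> \<in> prob_measures. \<forall>f\<in>F. \<bar>(\<integral>x. f x \<partial>\<nu>) - (\<integral>x. f x \<partial>\<mu>)\<bar> < e}"

lemma openin_weak_star_nbhd:
  assumes "finite F" "F \<subseteq> bcontfun"
  shows "openin weak_star (weak_star_nbhd \<mu> F e)"
  using assms
proof (induction F rule: finite_induct)
  case empty
  then show ?case
    using openin_topspace[of weak_star] by (simp add: weak_star_nbhd_def topspace_weak_star)
next
  case (insert f F)
  have eq: "weak_star_nbhd \<mu> (insert f F) e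
      = weak_star_nbhd \<mu> F e \<inter> {\<nu> \<in> prob_measures. (\<integral>x. f x \<partial>\<nu>) \<in> ball (\<integral>x. f x \<partial>\<mu>) e}"
    unfolding weak_star_nbhd_def by (auto simp: dist_real_def abs_minus_commute)
  show ?case
    unfolding eq using insert.prems
    by (intro openin_Int insert.IH openin_weak_star_subbasic) simp_all
qed

lemma weak_star_nbhd_subset_open:
  fixes \<mu> :: "'a::metric_space measure"
  assumes "openin weak_star W" "\<mu> \<in> W"
  shows "\<exists>F e. finite F \<and> F \<subseteq> bcontfun \<and> e > 0 \<and> weak_star_nbhd \<mu> F e \<subseteq> W"
proof -
  have "generate_topology_on {{\<mu> \<in> prob_measures. (\<integral>x. f x \<partial>\<mu>) \<in> U} | f U. f \<in> bcontfun \<and> open (U :: real set)} W"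
    using assms(1) unfolding weak_star_bcontfun by (rule openin_topology_generated_by)
  then show ?thesis
    using assms(2)
  proof (induction rule: generate_topology_on.induct)
    case (Int a b)
    then have "\<mu> \<in> a" "\<mu> \<in> b"
      by auto
    then obtain F1 e1 F2 e2 where
      "finite F1" "F1 \<subseteq> bcontfun" "e1 > 0" "weak_star_nbhd \<mu> F1 e1 \<subseteq> a"
      "finite F2" "F2 \<subseteq> bcontfun" "e2 > 0" "weak_star_nbhd \<mu> F2 e2 \<subseteq> b"
      using Int.IH by meson
    then show ?case
      by (intro exI[of _ "F1 \<union> F2"] exI[of _ "min e1 e2"]) (auto simp: weak_star_nbhd_def)
  next
    case (UN K)
    then obtain k where k: "k \<in> K" "\<mu> \<in> k"
      by blast
    then obtain F e where "finite F" "F \<subseteq> bcontfun" "e > 0" "weak_star_nbhd \<mu> F e \<subseteq> k"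
      using UN.IH[OF k] by blast
    with k(1) show ?case
      by blast
  next
    case (Basis s)
    from Basis.hyps obtain f :: "'a \<Rightarrow> real" and U where s: "s = {\<mu> \<in> prob_measures. (\<integral>x. f x \<partial>\<mu>) \<in> U}" "f \<in> bcontfun" "open U"
      by blast
    moreover have "(\<integral>x. f x \<partial>\<mu>) \<in> U"
      using Basis.prems s(1) by blast
    ultimately obtain e where "e > 0" "ball (\<integral>x. f x \<partial>\<mu>) e \<subseteq> U"
      using open_contains_ball by blast
    then have "weak_star_nbhd \<mu> {f} e \<subseteq> s"
      unfolding s(1) weak_star_nbhd_def by (auto simp: dist_real_def abs_minus_commute)
    then show ?case
      using s(2) \<open>e > 0\<close> by (intro exI[of _ "{f}"] exI[of _ e]) auto
  qed simp
qed

lemma in_weak_star_closure_iff: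
  fixes \<mu> :: "'a::metric_space measure"
  shows "\<mu> \<in> weak_star closure_of S \<longleftrightarrow> \<mu> \<in> prob_measures \<and>
    (\<forall>F e. finite F \<longrightarrow> F \<subseteq> bcontfun \<longrightarrow> e > 0 \<longrightarrow> (\<exists>s\<in>S. s \<in> weak_star_nbhd \<mu> F e))"
  (is "_ \<longleftrightarrow> _ \<and> ?approx")
proof (cases "\<mu> \<in> prob_measures")
  case True
  have ?approx if meets: "\<forall>W. \<mu> \<in> W \<and> openin weak_star W \<longrightarrow> (\<exists>s. s \<in> S \<and> s \<in> W)"
  proof (intro allI impI)
    fix F :: "('a \<Rightarrow> real) set" and e :: real
    assume "finite F" "F \<subseteq> bcontfun" "e > 0"
    then have "\<mu> \<in> weak_star_nbhd \<mu> F e" "openin weak_star (weak_star_nbhd \<mu> F e)"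
      using True openin_weak_star_nbhd by (simp_all add: weak_star_nbhd_def)
    then show "\<exists>s\<in>S. s \<in> weak_star_nbhd \<mu> F e"
      using meets by blast
  qed
  moreover have "\<exists>s. s \<in> S \<and> s \<in> W" if approx: ?approx and W: "\<mu> \<in> W" "openin weak_star W" for W
  proof -
    obtain F e where "finite F" "F \<subseteq> bcontfun" "e > 0" "weak_star_nbhd \<mu> F e \<subseteq> W"
      using weak_star_nbhd_subset_open[OF W(2,1)] by blast
    then show ?thesis
      using approx by blast
  qed
  ultimately show ?thesis
    using True unfolding in_closure_of topspace_weak_star by blast
next
  case False
  then show ?thesis
    using closure_of_subset_topspace[of weak_star S] by (auto simp: topspace_weak_star)
qed

lemma weak_star_closure_eq_closed_convex_hull:
  assumes "S \<subseteq> prob_measures" "convex_measures (weak_star closure_of S)"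
  shows "weak_star closure_of S = closed_convex_hull S"
proof
  show "weak_star closure_of S \<subseteq> closed_convex_hull S"
    unfolding closed_convex_hull_def by (rule Inter_greatest) (simp add: closure_of_minimal)
  show "closed_convex_hull S \<subseteq> weak_star closure_of S"
    unfolding closed_convex_hull_def using assms closure_of_subset[of S weak_star]
    by (intro Inter_lower) (simp add: closure_of_subset_topspace[of weak_star, unfolded topspace_weak_star] topspace_weak_star)
qed

section \<open>Linking two periodic orbits\<close>

definition linking_orbit ::
    "('a::metric_space \<Rightarrow> 'a) \<Rightarrow> real \<Rightarrow> real \<Rightarrow> 'a \<Rightarrow> 'a \<Rightarrow> 'a \<Rightarrow> nat \<Rightarrow> nat \<Rightarrow> nat \<Rightarrow> nat \<Rightarrow> bool" where
  "linking_orbit T \<epsilon> lam y1 y2 z p1 p2 q1 q2 \<longleftrightarrow>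
    p1 \<ge> 1 \<and> p2 \<ge> 1 \<and> q1 \<ge> 1 \<and> q2 \<ge> 1 \<and>
    (T ^^ q2) z = z \<and>
    lam - \<epsilon> \<le> real p1 / (real p1 + real p2) \<and> real p1 / (real p1 + real p2) \<le> lam + \<epsilon> \<and>
    p1 \<le> q1 \<and> real q1 \<le> (1 + \<epsilon>) * real p1 \<and> z \<in> bowen_ball T y1 p1 \<epsilon> \<and>
    real p2 \<le> real q2 - real q1 \<and> real q2 - real q1 \<le> (1 + \<epsilon>) * real p2 \<and>
    (T ^^ q1) z \<in> bowen_ball T y2 p2 \<epsilon>"

lemma linkable_Per: "linkable T K \<Longrightarrow> K \<subseteq> Per T"
  unfolding linkable_def by (rule conjunct1)

lemma linkableD:
  assumes "linkable T K" "y1 \<in> K" "y2 \<in> K" "\<epsilon> > 0" "lam \<in> {0..1}"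
  shows "\<exists>z\<in>K. \<exists>p1 p2 q1 q2. linking_orbit T \<epsilon> lam y1 y2 z p1 p2 q1 q2"
  using assms unfolding linkable_def linking_orbit_def by blast

lemma bowen_ball_mono: "\<epsilon> \<le> \<epsilon>' \<Longrightarrow> bowen_ball T x n \<epsilon> \<subseteq> bowen_ball T x n \<epsilon>'"
  unfolding bowen_ball_def by fastforce

lemma linking_orbit_mono:
  assumes "linking_orbit T \<epsilon> lam y1 y2 z p1 p2 q1 q2" "\<epsilon> \<le> \<epsilon>'"
  shows "linking_orbit T \<epsilon>' lam y1 y2 z p1 p2 q1 q2"
proof -
  have "(1 + \<epsilon>) * real p \<le> (1 + \<epsilon>') * real p" for p
    using assms(2) by (intro mult_right_mono) auto
  then show ?thesis
    using assms bowen_ball_mono[OF assms(2)] unfolding linking_orbit_def by (smt (verit) subsetD)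
qed

lemma linkable_long_linking_orbit:
  assumes K: "linkable T K" "y1 \<in> K" "y2 \<in> K" and t: "t \<in> {0..1}" and "\<eta> > 0" "\<epsilon> > 0"
  shows "\<exists>lam z p1 p2 q1 q2. z \<in> K \<and> \<bar>lam - t\<bar> \<le> \<eta> \<and> N \<le> p1 + p2 \<and>
    linking_orbit T \<epsilon> lam y1 y2 z p1 p2 q1 q2"
proof -
  \<comment> \<open>A ratio \<open>lam\<close> away from all \<open>a / (a + b)\<close> with \<open>a, b < N\<close> can only be approximated with \<open>p\<^sub>1 + p\<^sub>2 \<ge> N\<close>.\<close>
  define R where "R = (\<lambda>(a, b). real a / (real a + real b)) ` ({..<N} \<times> {..<N})"
  have "finite R"
    unfolding R_def by simp
  moreover have "infinite {max 0 (t - \<eta>) .. min 1 (t + \<eta>)}"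
    using t \<open>\<eta> > 0\<close> by simp
  ultimately obtain lam where lam: "lam \<in> {max 0 (t - \<eta>) .. min 1 (t + \<eta>)}" "lam \<notin> R"
    by (metis Diff_iff Diff_infinite_finite finite.emptyI ex_in_conv)
  obtain d where d: "d > 0" "\<And>r. r \<in> R \<Longrightarrow> r \<noteq> lam \<Longrightarrow> d \<le> dist lam r"
    using finite_set_avoid[OF \<open>finite R\<close>, of lam] by blast
  obtain z p1 p2 q1 q2 where z: "z \<in> K" and link: "linking_orbit T (min \<epsilon> (d / 2)) lam y1 y2 z p1 p2 q1 q2"
    using linkableD[OF K, of "min \<epsilon> (d / 2)" lam] lam(1) d(1) \<open>\<epsilon> > 0\<close> by auto
  have "N \<le> p1 + p2"
  proof (rule ccontr)
    assume "\<not> N \<le> p1 + p2"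
    then have "real p1 / (real p1 + real p2) \<in> R"
      unfolding R_def by force
    moreover have "dist lam (real p1 / (real p1 + real p2)) \<le> d / 2"
      using link unfolding linking_orbit_def dist_real_def by linarith
    ultimately show False
      using d lam(2) by fastforce
  qed
  moreover have "\<bar>lam - t\<bar> \<le> \<eta>"
    using lam(1) by auto
  ultimately show ?thesis
    using z linking_orbit_mono[OF link, of \<epsilon>] by (auto intro!: exI)
qed

lemma linking_orbit_sum_approx:
  assumes link: "linking_orbit T \<epsilon> lam y1 y2 z p1 p2 q1 q2"
    and y: "y1 \<in> Per T" "y2 \<in> Per T" and f: "\<And>x. \<bar>f x\<bar> \<le> B"
    and close: "\<And>y j u. y \<in> {y1, y2} \<Longrightarrow> dist u ((T ^^ j) y) < \<epsilon> \<Longrightarrow> \<bar>f u - f ((T ^^ j) y)\<bar> \<le> d"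
  shows "\<bar>real q2 * orbit_average T z f - (real p1 * orbit_average T y1 f + real p2 * orbit_average T y2 f)\<bar>
    \<le> (real p1 + real p2) * d + 2 * (real (min_period T y1) + real (min_period T y2)) * B
      + (real q2 - (real p1 + real p2)) * B"
proof -
  have q: "p1 \<le> q1" "q1 + p2 \<le> q2" "q2 > 0" "(T ^^ q2) z = z"
    using link unfolding linking_orbit_def by linarith+
  have z: "z \<in> Per T"
    using q(3,4) unfolding Per_def by blast
  have "\<bar>(\<Sum>j<p1. f ((T ^^ j) z)) - real p1 * orbit_average T y1 f\<bar>
      \<le> real p1 * d + 2 * real (min_period T y1) * B"
    using y(1) f by (rule shadowing_sum_approx)
      (use link close in \<open>auto simp: linking_orbit_def bowen_ball_def\<close>)
  moreover have "\<bar>(\<Sum>j<p2. f ((T ^^ (q1 + j)) z)) - real p2 * orbit_average T y2 f\<bar>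
      \<le> real p2 * d + 2 * real (min_period T y2) * B"
    unfolding funpow_add add.commute[of q1] comp_apply
    using y(2) f by (rule shadowing_sum_approx)
      (use link close in \<open>auto simp: linking_orbit_def bowen_ball_def\<close>)
  ultimately have "\<bar>(\<Sum>j<q2. f ((T ^^ j) z)) - (real p1 * orbit_average T y1 f + real p2 * orbit_average T y2 f)\<bar>
      \<le> real p1 * d + 2 * real (min_period T y1) * B + (real p2 * d + 2 * real (min_period T y2) * B)
        + (real q2 - (real p1 + real p2)) * B"
    using f by (intro sum_concat_approx[OF q(1,2)]) auto
  moreover have "(\<Sum>j<q2. f ((T ^^ j) z)) = real q2 * orbit_average T z f"
    using orbit_average_period[OF z q(4,3)] q(3) by simp
  ultimately show ?thesis
    by (simp add: algebra_simps)
qed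

lemma convex_combination_approx:
  fixes Az A1 A2 B D \<epsilon> t p1 P Q :: real
  assumes P: "0 < P" "P \<le> Q" "Q - P \<le> \<epsilon> * P" and p1: "0 \<le> p1" "p1 \<le> P"
    and A: "\<bar>A1\<bar> \<le> B" "\<bar>A2\<bar> \<le> B" and D: "0 \<le> D"
    and E: "\<bar>Q * Az - (p1 * A1 + (P - p1) * A2)\<bar> \<le> P * D + (Q - P) * B"
  shows "\<bar>Az - (t * A1 + (1 - t) * A2)\<bar> \<le> D + 2 * \<epsilon> * B + 2 * \<bar>p1 / P - t\<bar> * B"
proof -
  define r where "r = p1 / P"
  define M where "M = r * A1 + (1 - r) * A2"
  have r: "0 \<le> r" "r \<le> 1" "p1 = r * P"
    using P p1 unfolding r_def by auto
  have B: "0 \<le> B"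
    using A by linarith
  have "0 \<le> \<epsilon> * P"
    using P by linarith
  then have \<epsilon>: "0 \<le> \<epsilon>"
    using P(1) by (simp add: zero_le_mult_iff)
  have "0 \<le> 1 - r"
    using r(2) by simp
  then have "\<bar>r * A1\<bar> \<le> r * B" "\<bar>(1 - r) * A2\<bar> \<le> (1 - r) * B"
    unfolding abs_mult abs_of_nonneg[OF r(1)] abs_of_nonneg[OF \<open>0 \<le> 1 - r\<close>]
    using r(1) A by (auto intro: mult_left_mono)
  moreover have "(1 - r) * B = B - r * B"
    by (simp add: algebra_simps)
  ultimately have M: "\<bar>M\<bar> \<le> B"
    unfolding M_def using abs_triangle_ineq[of "r * A1" "(1 - r) * A2"] by linarith
  have "Q * (Az - M) = (Q * Az - (p1 * A1 + (P - p1) * A2)) - (Q - P) * M"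
    unfolding M_def r(3) by (simp add: algebra_simps)
  moreover have "\<bar>(Q - P) * M\<bar> \<le> (Q - P) * B"
    using P(2) M by (simp add: abs_mult mult_left_mono)
  ultimately have "\<bar>Q * (Az - M)\<bar> \<le> P * D + 2 * ((Q - P) * B)"
    using E by linarith
  also have "\<dots> \<le> Q * (D + 2 * \<epsilon> * B)"
  proof -
    have "P * D \<le> Q * D"
      using P(2) D by (rule mult_right_mono)
    moreover have "(Q - P) * B \<le> \<epsilon> * P * B"
      using P(3) B by (rule mult_right_mono)
    moreover have "\<epsilon> * P * B \<le> \<epsilon> * Q * B"
      using mult_right_mono[OF mult_left_mono[OF P(2) \<epsilon>] B] .
    moreover have "Q * (D + 2 * \<epsilon> * B) = Q * D + 2 * (\<epsilon> * Q * B)"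
      by (simp add: algebra_simps)
    ultimately show ?thesis
      by linarith
  qed
  finally have "Q * \<bar>Az - M\<bar> \<le> Q * (D + 2 * \<epsilon> * B)"
    unfolding abs_mult using P by simp
  then have "\<bar>Az - M\<bar> \<le> D + 2 * \<epsilon> * B"
    using P by (simp only: mult_le_cancel_left_pos)
  moreover have "\<bar>M - (t * A1 + (1 - t) * A2)\<bar> \<le> \<bar>r - t\<bar> * (2 * B)"
  proof -
    have "M - (t * A1 + (1 - t) * A2) = (r - t) * (A1 - A2)"
      unfolding M_def by (simp add: algebra_simps)
    moreover have "\<bar>A1 - A2\<bar> \<le> 2 * B"
      using A by linarith
    ultimately show ?thesis
      by (simp add: abs_mult mult_left_mono)
  qed
  moreover have "\<bar>r - t\<bar> * (2 * B) = 2 * \<bar>r - t\<bar> * B"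
    by simp
  moreover have "\<bar>Az - (t * A1 + (1 - t) * A2)\<bar> \<le> \<bar>Az - M\<bar> + \<bar>M - (t * A1 + (1 - t) * A2)\<bar>"
    using dist_triangle[of Az _ M] unfolding dist_real_def .
  ultimately show ?thesis
    unfolding r_def by linarith
qed

lemma linking_orbit_average_approx:
  assumes link: "linking_orbit T \<epsilon> lam y1 y2 z p1 p2 q1 q2"
    and y: "y1 \<in> Per T" "y2 \<in> Per T" and f: "\<And>x. \<bar>f x\<bar> \<le> B" and "0 \<le> d"
    and close: "\<And>y j u. y \<in> {y1, y2} \<Longrightarrow> dist u ((T ^^ j) y) < \<epsilon> \<Longrightarrow> \<bar>f u - f ((T ^^ j) y)\<bar> \<le> d"
  defines "k \<equiv> real (min_period T y1) + real (min_period T y2)"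
  shows "\<bar>orbit_average T z f - (t * orbit_average T y1 f + (1 - t) * orbit_average T y2 f)\<bar>
    \<le> d + 2 * k * B / (real p1 + real p2) + 2 * \<epsilon> * B + 2 * (\<epsilon> + \<bar>lam - t\<bar>) * B"
proof -
  define P where "P = real p1 + real p2"
  have P: "0 < P" "P \<le> real q2" "real q2 - P \<le> \<epsilon> * P" "real p1 \<le> P"
    using link unfolding linking_orbit_def P_def by (auto simp: algebra_simps)
  have ratio: "\<bar>real p1 / P - lam\<bar> \<le> \<epsilon>"
    using link unfolding linking_orbit_def P_def by (simp add: abs_le_iff)
  have "0 \<le> B"
    using f[of z] by linarith
  have "P * (d + 2 * k * B / P) = P * d + 2 * k * B"
    using P(1) by (simp add: field_simps)
  then have "\<bar>real q2 * orbit_average T z f - (real p1 * orbit_average T y1 f + (P - real p1) * orbit_average T y2 f)\<bar>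
      \<le> P * (d + 2 * k * B / P) + (real q2 - P) * B"
    using linking_orbit_sum_approx[where f = f and B = B and d = d, OF link y f close]
    unfolding k_def P_def by simp
  then have "\<bar>orbit_average T z f - (t * orbit_average T y1 f + (1 - t) * orbit_average T y2 f)\<bar>
      \<le> d + 2 * k * B / P + 2 * \<epsilon> * B + 2 * \<bar>real p1 / P - t\<bar> * B"
    using P \<open>0 \<le> d\<close> \<open>0 \<le> B\<close> abs_orbit_average_le[OF y(1) f] abs_orbit_average_le[OF y(2) f]
    by (intro convex_combination_approx) (auto simp: k_def)
  moreover have "2 * \<bar>real p1 / P - t\<bar> * B \<le> 2 * (\<epsilon> + \<bar>lam - t\<bar>) * B"
    using \<open>0 \<le> B\<close> by (intro mult_right_mono) (use ratio in \<open>auto split: abs_split\<close>)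
  ultimately show ?thesis
    unfolding P_def by linarith
qed

lemma finite_continuity_delta:
  fixes F :: "('a::metric_space \<Rightarrow> real) set"
  assumes "finite F" "finite W" "\<And>f. f \<in> F \<Longrightarrow> continuous_on UNIV f" "d > 0"
  shows "\<exists>\<delta>>0. \<forall>f\<in>F. \<forall>w\<in>W. \<forall>u. dist u w < \<delta> \<longrightarrow> \<bar>f u - f w\<bar> < d"
proof -
  have "eventually (\<lambda>\<delta>. \<forall>u. dist u w < \<delta> \<longrightarrow> \<bar>f u - f w\<bar> < d) (at_right 0)" if f: "f \<in> F" for f w
  proof -
    obtain \<delta> where "\<delta> > 0" "\<forall>u. dist u w < \<delta> \<longrightarrow> dist (f u) (f w) < d"
      using assms(3)[OF f] assms(4) unfolding continuous_on_iff by blast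
    then show ?thesis
      unfolding eventually_at_right_field dist_real_def by (auto intro!: exI[of _ \<delta>])
  qed
  then have "eventually (\<lambda>\<delta>. \<forall>(f, w)\<in>F \<times> W. \<forall>u. dist u w < \<delta> \<longrightarrow> \<bar>f u - f w\<bar> < d) (at_right 0)"
    using assms(1,2) by (intro eventually_ball_finite) auto
  then obtain b :: real where b: "b > 0"
    "\<And>\<delta>. 0 < \<delta> \<Longrightarrow> \<delta> < b \<Longrightarrow> \<forall>(f, w)\<in>F \<times> W. \<forall>u. dist u w < \<delta> \<longrightarrow> \<bar>f u - f w\<bar> < d"
    unfolding eventually_at_right_field by auto
  from b(2)[of "b / 2"] b(1) show ?thesis
    by (intro exI[of _ "b / 2"]) auto
qed

lemma periodic_orbits_uniform_delta:
  fixes F :: "('a::metric_space \<Rightarrow> real) set"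
  assumes "finite Y" "Y \<subseteq> Per T" "finite F" "F \<subseteq> bcontfun" "d > 0"
  shows "\<exists>\<delta>>0. \<forall>f\<in>F. \<forall>y\<in>Y. \<forall>j u. dist u ((T ^^ j) y) < \<delta> \<longrightarrow> \<bar>f u - f ((T ^^ j) y)\<bar> \<le> d"
proof -
  have "finite (\<Union>y\<in>Y. range (\<lambda>j. (T ^^ j) y))"
    using assms(1,2) by (auto intro: finite_orbit_Per)
  moreover have "continuous_on UNIV f" if "f \<in> F" for f
    using assms(4) that by (auto simp: bcontfun_def)
  ultimately obtain \<delta> where "\<delta> > 0"
    "\<forall>f\<in>F. \<forall>w\<in>(\<Union>y\<in>Y. range (\<lambda>j. (T ^^ j) y)). \<forall>u. dist u w < \<delta> \<longrightarrow> \<bar>f u - f w\<bar> < d"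
    using finite_continuity_delta[OF assms(3) _ _ assms(5)] by blast
  then show ?thesis
    by (intro exI[of _ \<delta>]) (auto intro: less_imp_le)
qed

lemma linkable_orbit_average_approx:
  fixes T :: "'a::metric_space \<Rightarrow> 'a"
  assumes lk: "linkable T K" and y: "y1 \<in> K" "y2 \<in> K" and t: "t \<in> {0..1}"
    and F: "finite F" "F \<subseteq> bcontfun" and e: "e > 0"
  shows "\<exists>z\<in>K. \<forall>f\<in>F.
    \<bar>orbit_average T z f - (t * orbit_average T y1 f + (1 - t) * orbit_average T y2 f)\<bar> < e"
proof -
  have Per: "y1 \<in> Per T" "y2 \<in> Per T"
    using linkable_Per[OF lk] y by auto
  obtain B where B: "B > 0" "\<And>f x. f \<in> F \<Longrightarrow> \<bar>f x\<bar> \<le> B"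
    using finite_bcontfun_bound[OF F] by blast
  define k where "k = real (min_period T y1) + real (min_period T y2)"
  have Y: "finite {y1, y2}" "{y1, y2} \<subseteq> Per T" and "e / 8 > 0"
    using Per e by auto
  obtain \<delta> where \<delta>: "\<delta> > 0"
    "\<forall>f\<in>F. \<forall>y\<in>{y1, y2}. \<forall>j u. dist u ((T ^^ j) y) < \<delta> \<longrightarrow> \<bar>f u - f ((T ^^ j) y)\<bar> \<le> e / 8"
    using periodic_orbits_uniform_delta[OF Y F \<open>e / 8 > 0\<close>] by blast
  obtain N :: nat where N: "8 * k * B / e \<le> real N"
    using real_arch_simple by blast
  define \<epsilon> where "\<epsilon> = min \<delta> (e / (16 * B))"
  have \<epsilon>: "\<epsilon> > 0" "\<epsilon> \<le> \<delta>"
    using \<delta>(1) e B(1) by (auto simp: \<epsilon>_def)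
  have \<epsilon>B: "\<epsilon> * B \<le> e / 16"
    unfolding \<epsilon>_def using B(1) e
    by (simp add: min_mult_distrib_right pos_le_divide_eq min.coboundedI2 mult.assoc mult.left_commute[of B])
  obtain lam z p1 p2 q1 q2 where z: "z \<in> K" "\<bar>lam - t\<bar> \<le> e / (8 * B)" "N \<le> p1 + p2"
    and link: "linking_orbit T \<epsilon> lam y1 y2 z p1 p2 q1 q2"
    using linkable_long_linking_orbit[OF lk y t, of "e / (8 * B)" \<epsilon> N] e B(1) \<epsilon>(1) by auto
  have kB: "2 * k * B / (real p1 + real p2) \<le> e / 4"
  proof -
    have "8 * k * B \<le> real N * e"
      using N e by (simp add: divide_le_eq)
    also have "\<dots> \<le> (real p1 + real p2) * e"
      using z(3) e by (intro mult_right_mono) auto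
    finally have "8 * k * B \<le> (real p1 + real p2) * e" .
    moreover have "0 < real p1 + real p2"
      using link unfolding linking_orbit_def by simp
    ultimately show ?thesis
      by (simp add: pos_divide_le_eq algebra_simps)
  qed
  have lamB: "\<bar>lam - t\<bar> * B \<le> e / 8"
    using z(2) B(1) by (simp add: pos_le_divide_eq mult.assoc mult.left_commute[of B])
  have approx: "\<bar>orbit_average T z f - (t * orbit_average T y1 f + (1 - t) * orbit_average T y2 f)\<bar>
      \<le> e / 8 + 2 * k * B / (real p1 + real p2) + 2 * \<epsilon> * B + 2 * (\<epsilon> + \<bar>lam - t\<bar>) * B"
    if f: "f \<in> F" for f
    unfolding k_def
  proof (rule linking_orbit_average_approx[OF link Per])
    show "\<bar>f x\<bar> \<le> B" for x
      using B(2)[OF f] .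
    show "\<bar>f u - f ((T ^^ j) y)\<bar> \<le> e / 8" if "y \<in> {y1, y2}" "dist u ((T ^^ j) y) < \<epsilon>" for y j u
      using \<delta>(2) f that \<epsilon>(2) by force
  qed (use e in simp)
  \<comment> \<open>The error terms add up to at most \<open>e/8 + e/4 + e/8 + 3e/8\<close>.\<close>
  have "2 * \<epsilon> * B + 2 * (\<epsilon> + \<bar>lam - t\<bar>) * B = 4 * (\<epsilon> * B) + 2 * (\<bar>lam - t\<bar> * B)"
    by (simp add: algebra_simps)
  then have "\<bar>orbit_average T z f - (t * orbit_average T y1 f + (1 - t) * orbit_average T y2 f)\<bar> < e"
    if "f \<in> F" for f
    using approx[OF that] kB lamB \<epsilon>B e by linarith
  with z(1) show ?thesis
    by blast
qed

section \<open>The closure of the periodic measures is convex\<close>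

lemma abs_convex_combination_diff_le:
  fixes t a1 a2 b1 b2 d :: real
  assumes "0 \<le> t" "t \<le> 1" "\<bar>a1 - b1\<bar> \<le> d" "\<bar>a2 - b2\<bar> \<le> d"
  shows "\<bar>(t * a1 + (1 - t) * a2) - (t * b1 + (1 - t) * b2)\<bar> \<le> d"
proof -
  have "0 \<le> 1 - t"
    using assms(2) by simp
  then have "\<bar>t * (a1 - b1)\<bar> \<le> t * d" "\<bar>(1 - t) * (a2 - b2)\<bar> \<le> (1 - t) * d"
    unfolding abs_mult abs_of_nonneg[OF assms(1)] abs_of_nonneg[OF \<open>0 \<le> 1 - t\<close>]
    using assms by (auto intro: mult_left_mono)
  moreover have "(t * a1 + (1 - t) * a2) - (t * b1 + (1 - t) * b2) = t * (a1 - b1) + (1 - t) * (a2 - b2)"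
    by (simp add: algebra_simps)
  moreover have "t * d + (1 - t) * d = d"
    by (simp add: algebra_simps)
  ultimately show ?thesis
    using abs_triangle_ineq[of "t * (a1 - b1)" "(1 - t) * (a2 - b2)"] by linarith
qed

lemma weak_star_closure_Mco_approx:
  assumes "K \<subseteq> Per T" "\<mu> \<in> weak_star closure_of Mco T K" "finite F" "F \<subseteq> bcontfun" "e > 0"
  shows "\<exists>y\<in>K. \<forall>f\<in>F. \<bar>orbit_average T y f - (\<integral>x. f x \<partial>\<mu>)\<bar> < e"
proof -
  obtain s where "s \<in> Mco T K" "s \<in> weak_star_nbhd \<mu> F e"
    using assms(2-5) unfolding in_weak_star_closure_iff by blast
  then obtain y where y: "y \<in> K" "gamma T y \<in> weak_star_nbhd \<mu> F e"
    unfolding Mco_def by blast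
  moreover have "(\<integral>x. f x \<partial>gamma T y) = orbit_average T y f" if "f \<in> F" for f
    using assms(1,4) y(1) that by (auto intro: integral_gamma_bcontfun)
  ultimately show ?thesis
    unfolding weak_star_nbhd_def by (intro bexI[of _ y]) auto
qed

lemma convex_weak_star_closure_Mco:
  fixes T :: "'a::metric_space \<Rightarrow> 'a"
  assumes lk: "linkable T K"
  shows "convex_measures (weak_star closure_of Mco T K)"
  unfolding convex_measures_def
proof (intro ballI)
  fix \<mu> \<nu> and t :: real
  assume \<mu>: "\<mu> \<in> weak_star closure_of Mco T K" and \<nu>: "\<nu> \<in> weak_star closure_of Mco T K"
    and t: "t \<in> {0..1}"
  have Per: "K \<subseteq> Per T"
    using lk by (rule linkable_Per)
  have P: "\<mu> \<in> prob_measures" "\<nu> \<in> prob_measures"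
    using \<mu> \<nu> unfolding in_weak_star_closure_iff by blast+
  show "mix t \<mu> \<nu> \<in> weak_star closure_of Mco T K"
    unfolding in_weak_star_closure_iff
  proof (intro conjI allI impI)
    show "mix t \<mu> \<nu> \<in> prob_measures"
      using P t by (rule mix_in_prob_measures)
    fix F :: "('a \<Rightarrow> real) set" and e :: real
    assume F: "finite F" "F \<subseteq> bcontfun" and e: "e > 0"
    obtain y1 y2 where y: "y1 \<in> K" "y2 \<in> K"
      and y1: "\<And>f. f \<in> F \<Longrightarrow> \<bar>orbit_average T y1 f - (\<integral>x. f x \<partial>\<mu>)\<bar> < e / 4"
      and y2: "\<And>f. f \<in> F \<Longrightarrow> \<bar>orbit_average T y2 f - (\<integral>x. f x \<partial>\<nu>)\<bar> < e / 4"
      using weak_star_closure_Mco_approx[OF Per \<mu> F, of "e / 4"]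
        weak_star_closure_Mco_approx[OF Per \<nu> F, of "e / 4"] e by auto
    obtain z where z: "z \<in> K" and avg: "\<And>f. f \<in> F \<Longrightarrow>
        \<bar>orbit_average T z f - (t * orbit_average T y1 f + (1 - t) * orbit_average T y2 f)\<bar> < e / 2"
      using linkable_orbit_average_approx[OF lk y t F, of "e / 2"] e by auto
    have "\<bar>(\<integral>x. f x \<partial>gamma T z) - (\<integral>x. f x \<partial>mix t \<mu> \<nu>)\<bar> < e" if f: "f \<in> F" for f
    proof -
      let ?A = "t * orbit_average T y1 f + (1 - t) * orbit_average T y2 f"
      let ?I = "t * (\<integral>x. f x \<partial>\<mu>) + (1 - t) * (\<integral>x. f x \<partial>\<nu>)"
      have "\<bar>?A - ?I\<bar> \<le> e / 4"
        using t y1[OF f] y2[OF f] by (intro abs_convex_combination_diff_le) auto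
      moreover have "\<bar>orbit_average T z f - ?I\<bar> \<le> \<bar>orbit_average T z f - ?A\<bar> + \<bar>?A - ?I\<bar>"
        using dist_triangle[of "orbit_average T z f" ?I ?A] unfolding dist_real_def .
      moreover have "(\<integral>x. f x \<partial>gamma T z) = orbit_average T z f"
        using z Per F(2) f by (auto intro: integral_gamma_bcontfun)
      moreover have "(\<integral>x. f x \<partial>mix t \<mu> \<nu>) = ?I"
        using F(2) f by (intro integral_mix_bcontfun[OF P t]) auto
      ultimately show ?thesis
        using avg[OF f] by (simp only:)
    qed
    moreover have "gamma T z \<in> prob_measures"
      using z Per by (auto intro: gamma_in_prob_measures)
    ultimately show "\<exists>s\<in>Mco T K. s \<in> weak_star_nbhd (mix t \<mu> \<nu>) F e"
      using z unfolding Mco_def weak_star_nbhd_def by blast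
  qed
qed

theorem theorem5p13:
  fixes T :: "'a::polish_space \<Rightarrow> 'a" and K :: "'a set"
  assumes "dyn_system T" and "linkable T K"
  shows "weak_star closure_of (Mco T K) = closed_convex_hull (Mco T K)"
proof (rule weak_star_closure_eq_closed_convex_hull)
  show "Mco T K \<subseteq> prob_measures"
    using linkable_Per[OF assms(2)] unfolding Mco_def by (auto intro: gamma_in_prob_measures)
  show "convex_measures (weak_star closure_of Mco T K)"
    using assms(2) by (rule convex_weak_star_closure_Mco)
qed

end
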